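(* Let $(Q,\langle\mathsf{out},\delta\rangle)$ be a finite probabilistic automaton over a finite alphabet $A$, and let $E\subseteq A^*$ be consistent with $\varepsilon\in E$. Then the restriction map $[0,1]^{A^*}\to[0,1]^E$, $\sigma\mapsto\sigma|_E$, restricts to a bijection (an isomorphism of convex sets) from the image of $\mathsf{obs}$ onto the image of $\overline{\mathsf{row}}_E$.
   Context: A probabilistic automaton consists of a finite set of states $Q$, a transition function $\delta:Q\to\mathcal{D}(Q)^A$ and an output function $\mathsf{out}:Q\to[0,1]$, where $\mathcal{D}(Q)$ is the set of probability distributions on $Q$. Extend to $\mathcal{D}(Q)$ by $\overline{\delta}(v)(a)=\sum_{q}v(q)\,\delta(q)(a)$. Define $\mathsf{obs}:\mathcal{D}(Q)\to[0,1]^{A^*}$ by $\mathsf{obs}(v)(\varepsilon)=\sum_q v(q)\,\mathsf{out}(q)$ and $\mathsf{obs}(v)(aw)=\mathsf{obs}(\overline{\delta}(v)(a))(w)$. For $E\subseteq A^*$, $\overline{\mathsf{row}}_E:\mathcal{D}(Q)\to[0,1]^E$ is $\overline{\mathsf{row}}_E(v)(e)=\mathsf{obs}(v)(e)$; write $v_1\equiv_E v_2$ if $\overline{\mathsf{row}}_E(v_1)=\overline{\mathsf{row}}_E(v_2)$. $E$ is consistent if $v_1\equiv_E v_2$ implies $v_1\equiv_{AE}v_2$ for all $v_1,v_2\in\mathcal{D}(Q)$, where $AE=\{ae\mid a\in A,e\in E\}$. *)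

theory Defs
  imports Complex_Main "HOL-Library.FuncSet"
begin

definition distr :: "('q::finite \<Rightarrow> real) set" where
  "distr = {v. (\<forall>q. 0 \<le> v q) \<and> (\<Sum>q\<in>UNIV. v q) = 1}"

definition is_PA :: "('q::finite \<Rightarrow> real) \<Rightarrow> ('q \<Rightarrow> 'a \<Rightarrow> 'q \<Rightarrow> real) \<Rightarrow> bool" where
  "is_PA out delta \<longleftrightarrow> (\<forall>q. 0 \<le> out q \<and> out q \<le> 1) \<and> (\<forall>q a. delta q a \<in> distr)"

definition delta_bar :: "('q::finite \<Rightarrow> 'a \<Rightarrow> 'q \<Rightarrow> real) \<Rightarrow> ('q \<Rightarrow> real) \<Rightarrow> 'a \<Rightarrow> 'q \<Rightarrow> real" where
  "delta_bar delta v a = (\<lambda>q'. \<Sum>q\<in>UNIV. v q * delta q a q')"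

fun obs :: "('q::finite \<Rightarrow> real) \<Rightarrow> ('q \<Rightarrow> 'a \<Rightarrow> 'q \<Rightarrow> real) \<Rightarrow> ('q \<Rightarrow> real) \<Rightarrow> 'a list \<Rightarrow> real" where
  "obs out delta v [] = (\<Sum>q\<in>UNIV. v q * out q)"
| "obs out delta v (a # w) = obs out delta (delta_bar delta v a) w"

text \<open>The row map, with values in [0,1]^E rendered as functions restricted to E.\<close>
definition row_bar :: "('q::finite \<Rightarrow> real) \<Rightarrow> ('q \<Rightarrow> 'a \<Rightarrow> 'q \<Rightarrow> real) \<Rightarrow> 'a list set \<Rightarrow> ('q \<Rightarrow> real) \<Rightarrow> 'a list \<Rightarrow> real" where
  "row_bar out delta E v = restrict (obs out delta v) E"

definition equivE :: "('q::finite \<Rightarrow> real) \<Rightarrow> ('q \<Rightarrow> 'a \<Rightarrow> 'q \<Rightarrow> real) \<Rightarrow> 'a list set \<Rightarrow> ('q \<Rightarrow> real) \<Rightarrow> ('q \<Rightarrow> real) \<Rightarrow> bool" where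
  "equivE out delta E v1 v2 \<longleftrightarrow> row_bar out delta E v1 = row_bar out delta E v2"

definition AE :: "'a list set \<Rightarrow> 'a list set" where
  "AE E = {a # e | a e. e \<in> E}"

definition consistent :: "('q::finite \<Rightarrow> real) \<Rightarrow> ('q \<Rightarrow> 'a \<Rightarrow> 'q \<Rightarrow> real) \<Rightarrow> 'a list set \<Rightarrow> bool" where
  "consistent out delta E \<longleftrightarrow> (\<forall>v1\<in>distr. \<forall>v2\<in>distr.
      equivE out delta E v1 v2 \<longrightarrow> equivE out delta (AE E) v1 v2)"

end

theory Submission
  imports Defs
begin

text \<open>Consistency lets \<open>\<equiv>\<^sub>E\<close> be pushed through one transition step; since \<open>\<epsilon> \<in> E\<close>,
  induction on the word then shows that \<open>\<equiv>\<^sub>E\<close>-equivalent distributions have the same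
  observation on every word. So \<open>obs v\<close> is determined by its restriction to \<open>E\<close>, which is
  \<open>row\<^sub>E v\<close>: restriction is injective on the image of \<open>obs\<close> and maps it onto that of \<open>row\<^sub>E\<close>.\<close>

lemma delta_bar_in_distr:
  assumes "\<And>q. delta q a \<in> distr" and "v \<in> distr"
  shows "delta_bar delta v a \<in> distr"
proof -
  have "(\<Sum>q'\<in>UNIV. delta_bar delta v a q') = (\<Sum>q\<in>UNIV. v q * (\<Sum>q'\<in>UNIV. delta q a q'))"
    unfolding delta_bar_def by (subst sum.swap) (simp add: sum_distrib_left)
  also have "\<dots> = 1"
    using assms unfolding distr_def by simp
  finally show ?thesis
    using assms unfolding distr_def delta_bar_def by (auto intro!: sum_nonneg)
qed

lemma equivE_iff: "equivE out delta E v1 v2 \<longleftrightarrow> (\<forall>e\<in>E. obs out delta v1 e = obs out delta v2 e)"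
  unfolding equivE_def row_bar_def restrict_def by (auto simp: fun_eq_iff)

lemma equivE_AE_iff:
  "equivE out delta (AE E) v1 v2 \<longleftrightarrow>
     (\<forall>a. equivE out delta E (delta_bar delta v1 a) (delta_bar delta v2 a))"
  unfolding equivE_iff AE_def by (auto; metis obs.simps(2))

lemma consistent_equivE_delta_bar:
  assumes "consistent out delta E" "v1 \<in> distr" "v2 \<in> distr" "equivE out delta E v1 v2"
  shows "equivE out delta E (delta_bar delta v1 a) (delta_bar delta v2 a)"
  using assms unfolding consistent_def equivE_AE_iff by blast

lemma consistent_equivE_imp_obs_eq:
  assumes "is_PA out delta" "consistent out delta E" "[] \<in> E"
    and "v1 \<in> distr" "v2 \<in> distr" "equivE out delta E v1 v2"
  shows "obs out delta v1 w = obs out delta v2 w"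
  using assms(4-6)
proof (induction w arbitrary: v1 v2)
  case Nil
  then show ?case
    using \<open>[] \<in> E\<close> unfolding equivE_iff by blast
next
  case (Cons a w)
  have "\<And>q. delta q a \<in> distr"
    using \<open>is_PA out delta\<close> unfolding is_PA_def by blast
  then have "delta_bar delta v1 a \<in> distr" "delta_bar delta v2 a \<in> distr"
    using Cons.prems by (simp_all add: delta_bar_in_distr)
  moreover have "equivE out delta E (delta_bar delta v1 a) (delta_bar delta v2 a)"
    by (rule consistent_equivE_delta_bar[OF \<open>consistent out delta E\<close> Cons.prems])
  ultimately show ?case
    using Cons.IH by simp
qed

theorem mainTheorem8:
  fixes out :: "'q::finite \<Rightarrow> real" and delta :: "'q \<Rightarrow> 'a::finite \<Rightarrow> 'q \<Rightarrow> real"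
    and E :: "'a list set"
  assumes "is_PA out delta"
    and "consistent out delta E"
    and "[] \<in> E"
  shows "bij_betw (\<lambda>\<sigma>. restrict \<sigma> E) (obs out delta ` distr) (row_bar out delta E ` distr)"
proof (rule bij_betw_imageI)
  show "inj_on (\<lambda>\<sigma>. restrict \<sigma> E) (obs out delta ` distr)"
  proof (rule inj_onI)
    fix \<sigma>1 \<sigma>2
    assume "\<sigma>1 \<in> obs out delta ` distr" "\<sigma>2 \<in> obs out delta ` distr"
      and "restrict \<sigma>1 E = restrict \<sigma>2 E"
    then obtain v1 v2 where "v1 \<in> distr" "v2 \<in> distr" "equivE out delta E v1 v2"
      and "\<sigma>1 = obs out delta v1" "\<sigma>2 = obs out delta v2"
      unfolding equivE_def row_bar_def by blast
    then show "\<sigma>1 = \<sigma>2"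
      using consistent_equivE_imp_obs_eq[OF assms] by blast
  qed
  show "(\<lambda>\<sigma>. restrict \<sigma> E) ` obs out delta ` distr = row_bar out delta E ` distr"
    unfolding row_bar_def image_image by simp
qed

end
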